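(* Let $h,l_1,l_2$ be integers and $g\ge 3$ an integer with $l_1-l_2\ge 2$. Put $Q=(l_2,h-l_2)$, $P=(l_1,h-l_1)$ and $R=(k,h-l_2)$ where $k=l_2+g$ (so $R$ lies on the line $X+Y=h+g$ and has the same $Y$-coordinate as $Q$). Then $${}_{Q}N_{P}^{R}=\binom{g-2}{k-l_1}.$$
   Context: Let $\Sigma=\{a,b\}$. A lattice path is a finite sequence of points of $\mathbb Z^2$ in which each consecutive difference is $(1,0)$ (an east step) or $(0,1)$ (a north step). The word $w(p)\in\Sigma^*$ of a lattice path $p$ records its steps in order, writing $a$ for an east step and $b$ for a north step; conversely, for a point $A\in\mathbb Z^2$ and a word $w$, $p_A(w)$ is the lattice path starting at $A$ whose word is $w$. For lattice paths $p,q$, $p\cap q$ denotes the set of lattice points lying on both. For distinct lattice points $A,B,C$, ${}_{A}\mathcal N_{B}^{C}$ is the set of triples $(p,q,p')$ where $p$ is a lattice path from $A$ to $C$, $q$ is a lattice path from $B$ to $C$, $p'=p_B(w(p))$, $p\cap q=\{C\}$ and $q\cap p'=\{B\}$; and ${}_{A}N_{B}^{C}=|{}_{A}\mathcal N_{B}^{C}|$. Binomial coefficients $\binom{N}{r}$ are $0$ when $r<0$ or $r>N$. *)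

theory Defs
  imports Main
begin

type_synonym point = "int \<times> int"

datatype letter = La | Lb

definition east :: "point \<Rightarrow> point" where
  "east A = (fst A + 1, snd A)"
definition north :: "point \<Rightarrow> point" where
  "north A = (fst A, snd A + 1)"

definition lattice_path :: "point list \<Rightarrow> bool" where
  "lattice_path p \<longleftrightarrow> p \<noteq> [] \<and>
     (\<forall>i. Suc i < length p \<longrightarrow> (p ! Suc i = east (p ! i) \<or> p ! Suc i = north (p ! i)))"

fun word_of :: "point list \<Rightarrow> letter list" where
  "word_of (x # y # ps) = (if y = east x then La else Lb) # word_of (y # ps)"
| "word_of _ = []"

fun path_of :: "point \<Rightarrow> letter list \<Rightarrow> point list" where
  "path_of A [] = [A]"
| "path_of A (La # w) = A # path_of (east A) w"
| "path_of A (Lb # w) = A # path_of (north A) w"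

definition Ntriples :: "point \<Rightarrow> point \<Rightarrow> point \<Rightarrow> (point list \<times> point list \<times> point list) set" where
  "Ntriples A B C = {(p, q, p'). lattice_path p \<and> hd p = A \<and> last p = C \<and>
      lattice_path q \<and> hd q = B \<and> last q = C \<and>
      p' = path_of B (word_of p) \<and>
      set p \<inter> set q = {C} \<and> set q \<inter> set p' = {B}}"

definition Ncount :: "point \<Rightarrow> point \<Rightarrow> point \<Rightarrow> nat" where
  "Ncount A B C = card (Ntriples A B C)"

definition ibinom :: "int \<Rightarrow> int \<Rightarrow> nat" where
  "ibinom N r = (if 0 \<le> r \<and> r \<le> N then nat N choose nat r else 0)"

end

theory Submission
  imports Defs "HOL-Library.Multiset"
begin

(* Since Q and R lie on the same row, p is the horizontal segment from Q to R, and p' is the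
   parallel segment of the same length g starting at P. The path q from P to R must meet these
   segments only in P and R. Its first step cannot be east, since it would land on p'; its
   last step cannot be east, since it would start on p. Conversely, after a first north step
   and before a last north step, q stays strictly between the two rows. Hence q corresponds to
   an arbitrary word with k - l1 east and l1 - l2 - 2 north steps, and there are
   binom(g - 2, k - l1) such words. *)

lemma shuffles_replicate:
  assumes "x \<noteq> y"
  shows "shuffles (replicate a x) (replicate b y) =
    {w. set w \<subseteq> {x, y} \<and> count_list w x = a \<and> count_list w y = b}"
proof (intro equalityI subsetI)
  fix w assume "w \<in> shuffles (replicate a x) (replicate b y)"
  then have "mset w = replicate_mset a x + replicate_mset b y"
    by (simp add: mset_shuffles)
  then show "w \<in> {w. set w \<subseteq> {x, y} \<and> count_list w x = a \<and> count_list w y = b}"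
    using assms by (auto simp flip: count_mset set_mset_mset)
next
  fix w assume w: "w \<in> {w. set w \<subseteq> {x, y} \<and> count_list w x = a \<and> count_list w y = b}"
  have "filter ((=) x) w = replicate a x"
    using w replicate_length_filter[of x w] by (simp add: count_list_eq_length_filter)
  moreover have "filter (\<lambda>z. x \<noteq> z) w = filter ((=) y) w"
    using w assms by (auto intro: filter_cong)
  then have "filter (\<lambda>z. x \<noteq> z) w = replicate b y"
    using w replicate_length_filter[of y w] by (simp add: count_list_eq_length_filter)
  ultimately show "w \<in> shuffles (replicate a x) (replicate b y)"
    using partition_in_shuffles[of w "(=) x"] by simp
qed

lemma hd_path_of [simp]: "hd (path_of A w) = A"
  by (cases "(A, w)" rule: path_of.cases) simp_all

lemma path_of_neq_Nil [simp]: "path_of A w \<noteq> []"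
  by (cases "(A, w)" rule: path_of.cases) simp_all

lemma start_in_path_of [simp]: "A \<in> set (path_of A w)"
  by (metis hd_in_set hd_path_of path_of_neq_Nil)

lemma last_path_of:
  "last (path_of A w) = (fst A + int (count_list w La), snd A + int (count_list w Lb))"
proof (induction w arbitrary: A)
  case (Cons c w)
  then show ?case by (cases c) (simp_all add: east_def north_def)
qed simp

lemma word_of_Cons_path_of:
  "word_of (A # path_of B w) = (if B = east A then La else Lb) # word_of (path_of B w)"
  by (cases "(B, w)" rule: path_of.cases) simp_all

lemma east_neq_north [simp]: "east A \<noteq> north A" "north A \<noteq> east A"
  by (auto simp: east_def north_def prod_eq_iff)

lemma word_of_path_of [simp]: "word_of (path_of A w) = w"
proof (induction w arbitrary: A)
  case (Cons c w)
  then show ?case by (cases c) (simp_all add: word_of_Cons_path_of)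
qed simp

lemma path_of_eq_path_of_iff [simp]: "path_of A u = path_of A v \<longleftrightarrow> u = v"
  by (metis word_of_path_of)

lemma lattice_path_Cons_Cons:
  "lattice_path (x # y # ps) \<longleftrightarrow> (y = east x \<or> y = north x) \<and> lattice_path (y # ps)"
  unfolding lattice_path_def by (simp add: All_less_Suc2)

lemma lattice_path_Cons_path_of:
  "lattice_path (A # path_of B w) \<longleftrightarrow> (B = east A \<or> B = north A) \<and> lattice_path (path_of B w)"
  by (cases "(B, w)" rule: path_of.cases) (simp_all add: lattice_path_Cons_Cons)

lemma lattice_path_path_of [simp]: "lattice_path (path_of A w)"
proof (induction w arbitrary: A)
  case Nil
  show ?case by (simp add: lattice_path_def)
next
  case (Cons c w)
  then show ?case
    by (cases c) (simp_all add: lattice_path_Cons_path_of)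
qed

lemma path_of_word_of: "lattice_path p \<Longrightarrow> path_of (hd p) (word_of p) = p"
proof (induction p rule: word_of.induct)
  case (1 x y ps)
  then show ?case by (auto simp: lattice_path_Cons_Cons)
qed (simp_all add: lattice_path_def)

lemma lattice_path_from_iff: "lattice_path p \<and> hd p = A \<longleftrightarrow> p = path_of A (word_of p)"
  by (metis hd_path_of lattice_path_path_of path_of_word_of)

lemma path_of_append:
  "path_of A (w @ v) = butlast (path_of A w) @ path_of (last (path_of A w)) v"
proof (induction w arbitrary: A)
  case (Cons c w)
  then show ?case by (cases c) simp_all
qed simp

lemma set_path_of_snoc:
  "set (path_of A (w @ [c])) = insert (last (path_of A (w @ [c]))) (set (path_of A w))"
proof -
  have "set (butlast (path_of A w)) \<union> {last (path_of A w)} = set (path_of A w)"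
    by (metis append_butlast_last_id empty_set list.simps(15) path_of_neq_Nil set_append)
  then show ?thesis
    by (cases c) (auto simp: path_of_append)
qed

lemma path_of_bounds:
  assumes "z \<in> set (path_of A w)"
  shows "fst A \<le> fst z \<and> fst z \<le> fst A + int (count_list w La) \<and>
    snd A \<le> snd z \<and> snd z \<le> snd A + int (count_list w Lb)"
  using assms
proof (induction w arbitrary: A)
  case (Cons c w)
  then show ?case by (cases c) (fastforce simp: east_def north_def)+
qed simp

lemma set_path_of_replicate_east:
  "set (path_of (x, y) (replicate n La)) = {x..x + int n} \<times> {y}"
proof (induction n arbitrary: x)
  case (Suc n)
  have "{x..x + int (Suc n)} = insert x {x + 1..x + 1 + int n}"
    by auto
  then show ?case using Suc by (simp add: east_def)
qed simp

definition words_with :: "int \<Rightarrow> int \<Rightarrow> letter list set" where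
  "words_with m n = {w. int (count_list w La) = m \<and> int (count_list w Lb) = n}"

lemma last_path_of_eq_iff:
  "last (path_of A w) = C \<longleftrightarrow> w \<in> words_with (fst C - fst A) (snd C - snd A)"
  by (auto simp: last_path_of words_with_def)

lemma words_with_eq_shuffles:
  assumes "0 \<le> m" "0 \<le> n"
  shows "words_with m n = shuffles (replicate (nat m) La) (replicate (nat n) Lb)"
proof -
  have "c \<in> {La, Lb}" for c
    by (cases c) simp_all
  then have "w \<in> words_with m n \<longleftrightarrow>
      set w \<subseteq> {La, Lb} \<and> count_list w La = nat m \<and> count_list w Lb = nat n" for w
    using assms by (auto simp: words_with_def)
  then show ?thesis
    by (auto simp: shuffles_replicate)
qed

lemma words_with_0: "0 \<le> m \<Longrightarrow> words_with m 0 = {replicate (nat m) La}"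
  by (simp add: words_with_eq_shuffles)

lemma card_words_with: "card (words_with m n) = ibinom (m + n) m"
proof (cases "0 \<le> m \<and> 0 \<le> n")
  case True
  have "card (shuffles (replicate (nat m) La) (replicate (nat n) Lb)) = (nat m + nat n) choose nat m"
    by (rule card_disjoint_shuffles[THEN trans]) auto
  then show ?thesis
    using True by (simp add: words_with_eq_shuffles ibinom_def nat_add_distrib)
next
  case False
  then have "words_with m n = {}"
    by (auto simp: words_with_def)
  then show ?thesis
    using False by (auto simp: ibinom_def)
qed

lemma Ntriples_eq_image:
  "Ntriples A B C = (\<lambda>(u, v). (path_of A u, path_of B v, path_of B u)) `
    {(u, v). last (path_of A u) = C \<and> last (path_of B v) = C \<and>
      set (path_of A u) \<inter> set (path_of B v) = {C} \<and>
      set (path_of B v) \<inter> set (path_of B u) = {B}}"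
    (is "_ = ?f ` ?W")
proof (intro equalityI subsetI)
  fix t assume "t \<in> Ntriples A B C"
  then obtain p q where "t = (p, q, path_of B (word_of p))"
    and p: "lattice_path p \<and> hd p = A" "last p = C" and q: "lattice_path q \<and> hd q = B" "last q = C"
    and "set p \<inter> set q = {C}" "set q \<inter> set (path_of B (word_of p)) = {B}"
    unfolding Ntriples_def by blast
  moreover have "p = path_of A (word_of p)" "q = path_of B (word_of q)"
    using p(1) q(1) lattice_path_from_iff by blast+
  ultimately have "t = ?f (word_of p, word_of q)" "(word_of p, word_of q) \<in> ?W"
    by simp_all
  then show "t \<in> ?f ` ?W" by blast
next
  fix t assume "t \<in> ?f ` ?W"
  then obtain u v where "(u, v) \<in> ?W" "t = ?f (u, v)"
    by auto
  then show "t \<in> Ntriples A B C"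
    by (simp add: Ntriples_def)
qed

lemma Ncount_eq_card_words:
  "Ncount A B C = card {(u, v). last (path_of A u) = C \<and> last (path_of B v) = C \<and>
      set (path_of A u) \<inter> set (path_of B v) = {C} \<and>
      set (path_of B v) \<inter> set (path_of B u) = {B}}"
  unfolding Ncount_def Ntriples_eq_image
  by (rule card_image) (simp add: inj_on_def)

lemma first_step_north:
  assumes "set (path_of B (c # w)) \<inter> ({fst B..fst B + g} \<times> {snd B}) \<subseteq> {B}" "0 < g"
  shows "c = Lb"
proof (rule ccontr)
  assume "c \<noteq> Lb"
  then have "east B \<in> set (path_of B (c # w)) \<inter> ({fst B..fst B + g} \<times> {snd B})"
    using \<open>0 < g\<close> by (cases c) (auto simp: east_def mem_Times_iff)
  then show False
    using assms(1) by (auto simp: east_def prod_eq_iff)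
qed

lemma last_step_north:
  assumes "({fst C - g..fst C} \<times> {snd C}) \<inter> set (path_of B (w @ [c])) \<subseteq> {C}"
    and "last (path_of B (w @ [c])) = C" "0 < g"
  shows "c = Lb"
proof (rule ccontr)
  assume "c \<noteq> Lb"
  then have c: "c = La"
    by (cases c) simp_all
  define X where "X = last (path_of B w)"
  have "C = east X"
    using assms(2) by (simp add: c X_def path_of_append)
  moreover have "X \<in> set (path_of B (w @ [c]))"
    by (simp add: X_def set_path_of_snoc)
  ultimately have "X \<in> ({fst C - g..fst C} \<times> {snd C}) \<inter> set (path_of B (w @ [c]))"
    using \<open>0 < g\<close> by (auto simp: east_def mem_Times_iff)
  then show False
    using assms(1) \<open>C = east X\<close> by (auto simp: east_def prod_eq_iff)
qed

lemma set_path_of_north_detour: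
  "set (path_of B (Lb # w @ [Lb])) =
    insert B (insert (last (path_of B (Lb # w @ [Lb]))) (set (path_of (north B) w)))"
  by (simp add: set_path_of_snoc)

lemma words_avoiding_segments_eq:
  fixes a x y y' g :: int
  assumes "0 < g" "y' + 2 \<le> y"
  shows "{v. last (path_of (x, y') v) = (a + g, y) \<and>
      ({a..a + g} \<times> {y}) \<inter> set (path_of (x, y') v) = {(a + g, y)} \<and>
      set (path_of (x, y') v) \<inter> ({x..x + g} \<times> {y'}) = {(x, y')}} =
    (\<lambda>w. Lb # w @ [Lb]) ` words_with (a + g - x) (y - y' - 2)"
    (is "?V = ?f ` ?W")
proof (intro equalityI subsetI)
  fix v assume "v \<in> ?V"
  then have last_v: "last (path_of (x, y') v) = (a + g, y)"
    and top: "({a..a + g} \<times> {y}) \<inter> set (path_of (x, y') v) = {(a + g, y)}"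
    and bottom: "set (path_of (x, y') v) \<inter> ({x..x + g} \<times> {y'}) = {(x, y')}"
    by blast+
  have counts: "int (count_list v La) = a + g - x" "int (count_list v Lb) = y - y'"
    using last_v by (simp_all add: last_path_of)
  have "2 \<le> length v"
    using counts(2) assms count_le_length[of v Lb] by linarith
  then obtain c r where "v = c # r" "r \<noteq> []"
    by (cases v) (auto simp: Suc_le_eq)
  then obtain w d where v: "v = c # w @ [d]"
    by (cases r rule: rev_cases) auto
  have "c = Lb"
    using bottom assms unfolding v by (intro first_step_north[of "(x, y')" c "w @ [d]" g]) auto
  moreover have "d = Lb"
    using top last_v assms unfolding v
    by (intro last_step_north[where B = "(x, y')" and w = "c # w" and C = "(a + g, y)" and g = g])
      auto
  ultimately have v_eq: "v = ?f w"
    using v by simp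
  moreover have "w \<in> ?W"
    using counts unfolding v_eq by (simp add: words_with_def)
  ultimately show "v \<in> ?f ` ?W" by blast
next
  fix v assume "v \<in> ?f ` ?W"
  then obtain w where v: "v = ?f w" and w: "w \<in> ?W" by blast
  have last_v: "last (path_of (x, y') (?f w)) = (a + g, y)"
    using w by (simp add: last_path_of words_with_def north_def)
  have interior: "y' < snd z \<and> snd z < y" if "z \<in> set (path_of (north (x, y')) w)" for z
    using path_of_bounds[OF that] w by (auto simp: words_with_def north_def)
  have path: "set (path_of (x, y') v) =
      insert (x, y') (insert (a + g, y) (set (path_of (north (x, y')) w)))"
    unfolding v set_path_of_north_detour last_v ..
  have "({a..a + g} \<times> {y}) \<inter> set (path_of (x, y') v) = {(a + g, y)}"
    unfolding path using interior assms by fastforce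
  moreover have "set (path_of (x, y') v) \<inter> ({x..x + g} \<times> {y'}) = {(x, y')}"
    unfolding path using interior assms by fastforce
  ultimately show "v \<in> ?V"
    using last_v v by blast
qed

theorem Ncount_same_row:
  fixes a x y y' g :: int
  assumes "0 < g" "y' + 2 \<le> y"
  shows "Ncount (a, y) (x, y') (a + g, y) = ibinom (a + g - x + (y - y' - 2)) (a + g - x)"
proof -
  let ?u = "replicate (nat g) La"
  have horizontal: "last (path_of (a, y) u) = (a + g, y) \<longleftrightarrow> u = ?u" for u
    using words_with_0[of g] assms by (simp add: last_path_of_eq_iff)
  have segments: "set (path_of (a, y) ?u) = {a..a + g} \<times> {y}"
    "set (path_of (x, y') ?u) = {x..x + g} \<times> {y'}"
    using assms by (simp_all add: set_path_of_replicate_east)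
  have "Ncount (a, y) (x, y') (a + g, y) =
      card ({?u} \<times> (\<lambda>w. Lb # w @ [Lb]) ` words_with (a + g - x) (y - y' - 2))"
    unfolding Ncount_eq_card_words words_avoiding_segments_eq[OF assms, symmetric]
    using assms by (intro arg_cong[where f = card]) (auto simp: horizontal segments)
  also have "\<dots> = card (words_with (a + g - x) (y - y' - 2))"
    by (simp add: card_cartesian_product_singleton card_image inj_on_def)
  finally show ?thesis
    by (simp add: card_words_with)
qed

theorem mainTheorem7:
  fixes h l1 l2 g k :: int
  assumes "g \<ge> 3" and "l1 - l2 \<ge> 2" and "k = l2 + g"
  shows "Ncount (l2, h - l2) (l1, h - l1) (k, h - l2) = ibinom (g - 2) (k - l1)"
proof -
  have "Ncount (l2, h - l2) (l1, h - l1) (l2 + g, h - l2) =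
      ibinom (l2 + g - l1 + (h - l2 - (h - l1) - 2)) (l2 + g - l1)"
    using assms by (intro Ncount_same_row) auto
  then show ?thesis
    using assms by simp
qed

end
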